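(* Let $(X,\leq)$ be a partially ordered set and suppose $d$ is a metric on $X$ such that $(X,d)$ is a complete metric space. Let $F:X\times X\to X$ be a continuous mapping having the mixed monotone property on $X$. Assume that for all $x,y,u,v\in X$ with $x\geq u$ and $y\leq v$, $$d\big(F(x,y),F(u,v)\big)\leq \delta(x,y,u,v)\,\big[d(x,u)+d(y,v)\big],$$ where $$\delta(x,y,u,v)=\frac{d(x,F(u,v))+d(y,F(v,u))+d(u,F(x,y))+d(v,F(y,x))}{1+2\big[d(x,F(x,y))+d(y,F(y,x))+d(u,F(u,v))+d(v,F(v,u))\big]}.$$ If there exist $x_0,y_0\in X$ such that $x_0\leq F(x_0,y_0)$ and $y_0\geq F(y_0,x_0)$, then $F$ has at least one coupled fixed point, i.e., there exist $x,y\in X$ with $x=F(x,y)$ and $y=F(y,x)$.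
   Context: A mapping $F:X\times X\to X$ on a partially ordered set $(X,\leq)$ has the mixed monotone property if $F(x,y)$ is monotone nondecreasing in $x$ and monotone nonincreasing in $y$: for all $x,y\in X$, $x_1\leq x_2$ implies $F(x_1,y)\leq F(x_2,y)$, and $y_1\leq y_2$ implies $F(x,y_1)\geq F(x,y_2)$. An element $(x,y)\in X\times X$ is a coupled fixed point of $F$ if $F(x,y)=x$ and $F(y,x)=y$. *)

theory Defs
  imports "HOL-Analysis.Analysis"
begin

definition mixed_monotone :: "('a::order \<Rightarrow> 'a \<Rightarrow> 'a) \<Rightarrow> bool" where
  "mixed_monotone F \<longleftrightarrow>
     (\<forall>x1 x2 y. x1 \<le> x2 \<longrightarrow> F x1 y \<le> F x2 y) \<and>
     (\<forall>x y1 y2. y1 \<le> y2 \<longrightarrow> F x y1 \<ge> F x y2)"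

definition coupled_fixed_point :: "('a \<Rightarrow> 'a \<Rightarrow> 'a) \<Rightarrow> 'a \<Rightarrow> 'a \<Rightarrow> bool" where
  "coupled_fixed_point F x y \<longleftrightarrow> F x y = x \<and> F y x = y"

end

theory Submission
  imports Defs
begin

text \<open>
  Iterate \<open>(x, y) \<mapsto> (F x y, F y x)\<close> from \<open>(x0, y0)\<close>. Mixed monotonicity keeps every iterate
  a pair with \<open>x \<le> F x y\<close> and \<open>F y x \<le> y\<close>, so the contractive condition applies to consecutive
  iterates. For these, with \<open>D n\<close> the displacement of the \<open>n\<close>-th iterate and
  \<open>s = D n + D (n + 1)\<close>, the numerator of \<open>\<delta>\<close> is at most \<open>s\<close> by the triangle inequality and
  the denominator is exactly \<open>1 + 2 s\<close>, so \<open>D (n + 1) \<le> 2 s / (1 + 2 s) * D n\<close>. Hence \<open>D\<close>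
  decreases, the factor stays below \<open>4 D 0 / (1 + 4 D 0) < 1\<close>, the displacements are summable,
  the iterates form a Cauchy sequence, and by continuity their limit is a coupled fixed point.
\<close>

lemma dist_le_sum_dist_Suc:
  fixes z :: "nat \<Rightarrow> 'a::metric_space"
  assumes "m \<le> n"
  shows "dist (z m) (z n) \<le> (\<Sum>i=m..<n. dist (z i) (z (Suc i)))"
  using assms
proof (induction n rule: dec_induct)
  case base
  then show ?case by simp
next
  case (step n)
  have "dist (z m) (z (Suc n)) \<le> dist (z m) (z n) + dist (z n) (z (Suc n))"
    by (rule dist_triangle)
  with step show ?case by simp
qed

lemma Cauchy_if_summable_dist_Suc:
  fixes z :: "nat \<Rightarrow> 'a::metric_space"
  assumes "summable (\<lambda>n. dist (z n) (z (Suc n)))"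
  shows "Cauchy z"
  unfolding Cauchy_altdef
proof (intro allI impI)
  fix e :: real
  assume "e > 0"
  with assms obtain N where N: "\<And>m n. m \<ge> N \<Longrightarrow> norm (\<Sum>i=m..<n. dist (z i) (z (Suc i))) < e"
    unfolding summable_Cauchy by blast
  show "\<exists>M. \<forall>m\<ge>M. \<forall>n>m. dist (z m) (z n) < e"
  proof (intro exI allI impI)
    fix m n assume "m \<ge> N" "n > m"
    then show "dist (z m) (z n) < e"
      using dist_le_sum_dist_Suc[of m n z] N[of m n] by simp
  qed
qed

lemma summable_if_Suc_le_mono_factor:
  fixes D :: "nat \<Rightarrow> real" and \<phi> :: "real \<Rightarrow> real"
  assumes nonneg: "\<And>n. 0 \<le> D n"
    and \<phi>_mono: "mono_on {0..} \<phi>" and \<phi>_less_1: "\<And>t. 0 \<le> t \<Longrightarrow> \<phi> t < 1"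
    and step: "\<And>n. D (Suc n) \<le> \<phi> (D n + D (Suc n)) * D n"
  shows "summable D"
proof -
  have "D (Suc n) \<le> D n" for n
  proof -
    have "\<phi> (D n + D (Suc n)) * D n \<le> 1 * D n"
      using \<phi>_less_1[of "D n + D (Suc n)"] nonneg[of n] nonneg[of "Suc n"]
      by (intro mult_right_mono) auto
    with step[of n] show ?thesis by simp
  qed
  then have le_D0: "D n \<le> D 0" for n
    by (induction n) (auto intro: order_trans)
  show ?thesis
  proof (rule summable_ratio_test)
    show "\<phi> (2 * D 0) < 1"
      using nonneg[of 0] \<phi>_less_1 by simp
    fix n
    have "\<phi> (D n + D (Suc n)) \<le> \<phi> (2 * D 0)"
      using le_D0[of n] le_D0[of "Suc n"] nonneg[of n] nonneg[of "Suc n"]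
      by (intro mono_onD[OF \<phi>_mono]) auto
    then show "norm (D (Suc n)) \<le> \<phi> (2 * D 0) * norm (D n)"
      using step[of n] nonneg[of n] nonneg[of "Suc n"]
      by (smt (verit) mult_right_mono real_norm_def)
  qed
qed

definition coupled_map :: "('a \<Rightarrow> 'a \<Rightarrow> 'a) \<Rightarrow> 'a \<times> 'a \<Rightarrow> 'a \<times> 'a" where
  "coupled_map F = (\<lambda>(x, y). (F x y, F y x))"

definition coupled_displacement :: "('a::metric_space \<Rightarrow> 'a \<Rightarrow> 'a) \<Rightarrow> 'a \<times> 'a \<Rightarrow> real" where
  "coupled_displacement F = (\<lambda>(x, y). dist x (F x y) + dist y (F y x))"

definition coupled_lower_upper :: "('a::order \<Rightarrow> 'a \<Rightarrow> 'a) \<Rightarrow> 'a \<times> 'a \<Rightarrow> bool" where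
  "coupled_lower_upper F = (\<lambda>(x, y). x \<le> F x y \<and> F y x \<le> y)"

definition rational_coupled_contraction :: "('a::{order, metric_space} \<Rightarrow> 'a \<Rightarrow> 'a) \<Rightarrow> bool" where
  "rational_coupled_contraction F \<longleftrightarrow> (\<forall>x y u v. u \<le> x \<longrightarrow> y \<le> v \<longrightarrow>
      dist (F x y) (F u v) \<le>
        ((dist x (F u v) + dist y (F v u) + dist u (F x y) + dist v (F y x)) /
         (1 + 2 * (dist x (F x y) + dist y (F y x) + dist u (F u v) + dist v (F v u))))
        * (dist x u + dist y v))"

lemma coupled_map_fixed_iff: "coupled_map F (x, y) = (x, y) \<longleftrightarrow> coupled_fixed_point F x y"
  by (simp add: coupled_map_def coupled_fixed_point_def)

lemma continuous_on_coupled_map: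
  assumes F: "continuous_on UNIV (\<lambda>(x, y). F x y)"
  shows "continuous_on UNIV (coupled_map F)"
proof -
  have "continuous_on UNIV ((\<lambda>(x, y). F x y) \<circ> prod.swap)"
    by (rule continuous_on_compose[OF continuous_on_swap]) (simp add: F)
  then have "continuous_on UNIV (\<lambda>p. ((\<lambda>(x, y). F x y) p, ((\<lambda>(x, y). F x y) \<circ> prod.swap) p))"
    using F by (intro continuous_on_Pair)
  moreover have "coupled_map F = (\<lambda>p. ((\<lambda>(x, y). F x y) p, ((\<lambda>(x, y). F x y) \<circ> prod.swap) p))"
    by (auto simp: coupled_map_def)
  ultimately show ?thesis
    by simp
qed

lemma coupled_displacement_nonneg: "0 \<le> coupled_displacement F p"
  by (simp add: coupled_displacement_def case_prod_unfold)

lemma dist_coupled_map_le: "dist p (coupled_map F p) \<le> coupled_displacement F p"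
  by (cases p) (simp add: coupled_map_def coupled_displacement_def dist_Pair_Pair sqrt_sum_squares_le_sum)

lemma coupled_lower_upper_coupled_map:
  assumes "mixed_monotone F" and "coupled_lower_upper F p"
  shows "coupled_lower_upper F (coupled_map F p)"
proof (cases p)
  case (Pair x y)
  have incr: "F a c \<le> F b c" and decr: "F c b \<le> F c a" if "a \<le> b" for a b c
    using assms(1) that unfolding mixed_monotone_def by auto
  from assms(2) Pair have x: "x \<le> F x y" and y: "F y x \<le> y"
    by (simp_all add: coupled_lower_upper_def)
  have "F x y \<le> F (F x y) y" using incr[OF x] .
  also have "\<dots> \<le> F (F x y) (F y x)" using decr[OF y] .
  finally have "F x y \<le> F (F x y) (F y x)" .
  moreover have "F (F y x) (F x y) \<le> F y (F x y)" using incr[OF y] .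
  moreover have "\<dots> \<le> F y x" using decr[OF x] .
  ultimately show ?thesis
    by (simp add: Pair coupled_map_def coupled_lower_upper_def)
qed

lemma fixpoint_if_funpow_tendsto:
  fixes f :: "'a::t2_space \<Rightarrow> 'a"
  assumes "continuous_on UNIV f" and lim: "(\<lambda>n. (f ^^ n) z) \<longlonglongrightarrow> p"
  shows "f p = p"
proof (rule LIMSEQ_unique)
  show "(\<lambda>n. (f ^^ Suc n) z) \<longlonglongrightarrow> p"
    using LIMSEQ_Suc[OF lim] .
  have "isCont f p"
    using assms(1) by (simp add: continuous_on_eq_continuous_at)
  from isCont_tendsto_compose[OF this lim]
  show "(\<lambda>n. (f ^^ Suc n) z) \<longlonglongrightarrow> f p"
    by simp
qed

lemma coupled_displacement_step:
  fixes F :: "'a::{order, metric_space} \<Rightarrow> 'a \<Rightarrow> 'a"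
  assumes contr: "rational_coupled_contraction F" and lu: "coupled_lower_upper F p"
  defines "s \<equiv> coupled_displacement F p + coupled_displacement F (coupled_map F p)"
  shows "coupled_displacement F (coupled_map F p) \<le> 2 * s / (1 + 2 * s) * coupled_displacement F p"
proof (cases p)
  case (Pair x y)
  define x1 y1 where "x1 = F x y" and "y1 = F y x"
  define x2 y2 where "x2 = F x1 y1" and "y2 = F y1 x1"
  have le: "x \<le> x1" "y1 \<le> y"
    using lu by (simp_all add: Pair x1_def y1_def coupled_lower_upper_def)
  have D0: "coupled_displacement F p = dist x x1 + dist y y1"
    by (simp add: Pair x1_def y1_def coupled_displacement_def)
  have D1: "coupled_displacement F (coupled_map F p) = dist x1 x2 + dist y1 y2"
    by (simp add: Pair x1_def y1_def x2_def y2_def coupled_map_def coupled_displacement_def)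
  have s: "s = dist x x1 + dist y y1 + dist x1 x2 + dist y1 y2"
    by (simp add: s_def D0 D1)
  define N where "N = dist x x2 + dist y y2"
  have "N \<le> s"
    unfolding N_def s using dist_triangle[of x x2 x1] dist_triangle[of y y2 y1] by linarith
  then have N_le: "N / (1 + 2 * s) \<le> s / (1 + 2 * s)"
    by (simp add: s divide_right_mono)
  have F_eqs: "F x y = x1" "F y x = y1" "F x1 y1 = x2" "F y1 x1 = y2"
    by (simp_all add: x1_def y1_def x2_def y2_def)
  have denom: "1 + 2 * (dist x1 x2 + dist y1 y2 + dist x x1 + dist y y1) = 1 + 2 * s"
    "1 + 2 * (dist y y1 + dist x x1 + dist y1 y2 + dist x1 x2) = 1 + 2 * s"
    by (simp_all add: s)
  have x_step: "dist x1 x2 \<le> N / (1 + 2 * s) * (dist x x1 + dist y y1)"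
  proof -
    from contr le have "dist (F x1 y1) (F x y) \<le>
        ((dist x1 (F x y) + dist y1 (F y x) + dist x (F x1 y1) + dist y (F y1 x1)) /
         (1 + 2 * (dist x1 (F x1 y1) + dist y1 (F y1 x1) + dist x (F x y) + dist y (F y x))))
        * (dist x1 x + dist y1 y)"
      unfolding rational_coupled_contraction_def by blast
    then show ?thesis
      by (simp only: F_eqs dist_self denom) (simp add: N_def dist_commute)
  qed
  have y_step: "dist y1 y2 \<le> N / (1 + 2 * s) * (dist x x1 + dist y y1)"
  proof -
    from contr le have "dist (F y x) (F y1 x1) \<le>
        ((dist y (F y1 x1) + dist x (F x1 y1) + dist y1 (F y x) + dist x1 (F x y)) /
         (1 + 2 * (dist y (F y x) + dist x (F x y) + dist y1 (F y1 x1) + dist x1 (F x1 y1))))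
        * (dist y y1 + dist x x1)"
      unfolding rational_coupled_contraction_def by blast
    then show ?thesis
      by (simp only: F_eqs dist_self denom) (simp add: N_def add.commute)
  qed
  have "dist x1 x2 + dist y1 y2 \<le> 2 * (N / (1 + 2 * s)) * (dist x x1 + dist y y1)"
    using x_step y_step by simp
  also have "\<dots> \<le> 2 * (s / (1 + 2 * s)) * (dist x x1 + dist y y1)"
    using N_le by (intro mult_right_mono) auto
  finally show ?thesis
    by (simp add: D0 D1)
qed

theorem theorem2p1:
  fixes F :: "'a::{order, complete_space} \<Rightarrow> 'a \<Rightarrow> 'a"
  assumes cont: "continuous_on UNIV (\<lambda>(x, y). F x y)"
    and mm: "mixed_monotone F"
    and contr: "\<And>x y u v. x \<ge> u \<Longrightarrow> y \<le> v \<Longrightarrow>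
      dist (F x y) (F u v) \<le>
        ((dist x (F u v) + dist y (F v u) + dist u (F x y) + dist v (F y x)) /
         (1 + 2 * (dist x (F x y) + dist y (F y x) + dist u (F u v) + dist v (F v u))))
        * (dist x u + dist y v)"
    and init: "x0 \<le> F x0 y0" "y0 \<ge> F y0 x0"
  shows "\<exists>x y. coupled_fixed_point F x y"
proof -
  define z where "z = (\<lambda>n. (coupled_map F ^^ n) (x0, y0))"
  have z_Suc: "z (Suc n) = coupled_map F (z n)" for n
    by (simp add: z_def)
  have lu: "coupled_lower_upper F (z n)" for n
  proof (induction n)
    case 0
    then show ?case using init by (simp add: z_def coupled_lower_upper_def)
  next
    case (Suc n)
    then show ?case by (simp add: z_Suc coupled_lower_upper_coupled_map[OF mm])
  qed
  have rc: "rational_coupled_contraction F"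
    using contr unfolding rational_coupled_contraction_def by blast
  have "summable (\<lambda>n. coupled_displacement F (z n))"
  proof (rule summable_if_Suc_le_mono_factor[where \<phi> = "\<lambda>t. 2 * t / (1 + 2 * t)"])
    show "mono_on {0..} (\<lambda>t::real. 2 * t / (1 + 2 * t))"
      by (intro mono_onI) (simp add: field_simps)
  qed (use coupled_displacement_step[OF rc lu] in \<open>simp_all add: z_Suc coupled_displacement_nonneg\<close>)
  then have "summable (\<lambda>n. dist (z n) (z (Suc n)))"
    by (rule summable_comparison_test') (simp add: z_Suc dist_coupled_map_le)
  then obtain p where "z \<longlonglongrightarrow> p"
    using Cauchy_if_summable_dist_Suc convergent_eq_Cauchy convergent_def by blast
  then have "coupled_map F p = p"
    unfolding z_def by (rule fixpoint_if_funpow_tendsto[OF continuous_on_coupled_map[OF cont]])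
  then show ?thesis
    by (metis coupled_map_fixed_iff surj_pair)
qed

end
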